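(* Let $L$ be a finite commutative C-loop. Then $L$ is (isomorphic to, via $(u,v)\mapsto uv$) the direct product $U\times V$, where $U=\{x\in L: |x|\text{ is a power of }2\}$ and $V=\{x\in L: |x|\text{ is odd}\}$; here $V$ is a commutative group and $U$ is a commutative C-loop in which every element has order a power of $2$. Consequently every finite commutative C-loop is a direct product of a finite commutative group and a finite commutative $2$-C-loop.
   Context: A C-loop is a loop satisfying $x(y(yz))=((xy)y)z$ for all $x,y,z$; C-loops are power associative and $|x|$ denotes the order of $x$, the least $n>0$ with $x^n=e$. A $2$-loop is a finite power associative loop of exponent $2^s$ for some $s$ (every element has order a power of $2$). *)

theory Defs
  imports Main
begin

definition loop :: "'a set \<Rightarrow> ('a \<Rightarrow> 'a \<Rightarrow> 'a) \<Rightarrow> 'a \<Rightarrow> bool" where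
  "loop L m e \<longleftrightarrow> e \<in> L \<and> (\<forall>x\<in>L. \<forall>y\<in>L. m x y \<in> L)
     \<and> (\<forall>x\<in>L. m e x = x \<and> m x e = x)
     \<and> (\<forall>a\<in>L. \<forall>b\<in>L. \<exists>!x. x \<in> L \<and> m a x = b)
     \<and> (\<forall>a\<in>L. \<forall>b\<in>L. \<exists>!y. y \<in> L \<and> m y a = b)"

definition commutative_on :: "'a set \<Rightarrow> ('a \<Rightarrow> 'a \<Rightarrow> 'a) \<Rightarrow> bool" where
  "commutative_on L m \<longleftrightarrow> (\<forall>x\<in>L. \<forall>y\<in>L. m x y = m y x)"

definition C_loop :: "'a set \<Rightarrow> ('a \<Rightarrow> 'a \<Rightarrow> 'a) \<Rightarrow> 'a \<Rightarrow> bool" where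
  "C_loop L m e \<longleftrightarrow> loop L m e \<and>
     (\<forall>x\<in>L. \<forall>y\<in>L. \<forall>z\<in>L. m x (m y (m y z)) = m (m (m x y) y) z)"

definition group_loop :: "'a set \<Rightarrow> ('a \<Rightarrow> 'a \<Rightarrow> 'a) \<Rightarrow> 'a \<Rightarrow> bool" where
  "group_loop L m e \<longleftrightarrow> loop L m e \<and>
     (\<forall>x\<in>L. \<forall>y\<in>L. \<forall>z\<in>L. m (m x y) z = m x (m y z))"

text \<open>Powers (C-loops are power associative, so the bracketing does not matter).\<close>
fun lpow :: "('a \<Rightarrow> 'a \<Rightarrow> 'a) \<Rightarrow> 'a \<Rightarrow> 'a \<Rightarrow> nat \<Rightarrow> 'a" where
  "lpow m e x 0 = e"
| "lpow m e x (Suc n) = m x (lpow m e x n)"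

definition elem_ord :: "('a \<Rightarrow> 'a \<Rightarrow> 'a) \<Rightarrow> 'a \<Rightarrow> 'a \<Rightarrow> nat" where
  "elem_ord m e x = (LEAST n. n > 0 \<and> lpow m e x n = e)"

end

theory Submission
  imports Defs "HOL-Computational_Algebra.Primes"
begin

text \<open>
  Putting x = e in the C-law gives the left alternative law y (y z) = (y y) z, and with
  commutativity the inverse property. From these, every square x x lies in the nucleus. Hence
  powers associate, since x^(2k+j) = (x x)^k x^j; moreover (x y)^2 = x^2 y^2, and an element of odd
  order 2k+1 equals (x x)^(k+1) and so is nuclear. Therefore the elements of 2-power order and
  those of odd order are both closed under products and inverses, the latter inside the nucleus,
  where they form an abelian group; the two sets meet only in e. A Bezout relation between the
  2-part and the odd part of |x| splits x as a product, and the splitting is unique and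
  multiplicative because the odd factors are nuclear.
\<close>

locale comm_C_loop =
  fixes L :: "'a set" and m :: "'a \<Rightarrow> 'a \<Rightarrow> 'a" and e :: 'a
  assumes C_loop: "C_loop L m e" and commutative: "commutative_on L m"
begin

lemma unit_closed: "e \<in> L"
  and mult_closed: "x \<in> L \<Longrightarrow> y \<in> L \<Longrightarrow> m x y \<in> L"
  and left_unit: "x \<in> L \<Longrightarrow> m e x = x"
  and right_unit: "x \<in> L \<Longrightarrow> m x e = x"
  and left_division: "a \<in> L \<Longrightarrow> b \<in> L \<Longrightarrow> \<exists>!x. x \<in> L \<and> m a x = b"
  using C_loop unfolding C_loop_def loop_def by simp_all

lemma commute: "x \<in> L \<Longrightarrow> y \<in> L \<Longrightarrow> m x y = m y x"
  using commutative unfolding commutative_on_def by blast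

lemma C_law: "x \<in> L \<Longrightarrow> y \<in> L \<Longrightarrow> z \<in> L \<Longrightarrow> m x (m y (m y z)) = m (m (m x y) y) z"
  using C_loop unfolding C_loop_def by blast

lemma left_cancel: "a \<in> L \<Longrightarrow> x \<in> L \<Longrightarrow> y \<in> L \<Longrightarrow> m a x = m a y \<Longrightarrow> x = y"
  using left_division[of a "m a x"] mult_closed by auto

lemma left_alternative: "y \<in> L \<Longrightarrow> z \<in> L \<Longrightarrow> m y (m y z) = m (m y y) z"
  using C_law[of e y z] unit_closed left_unit mult_closed by simp

definition loop_inv :: "'a \<Rightarrow> 'a" where
  "loop_inv x = (THE y. y \<in> L \<and> m x y = e)"

lemma inv_closed: "x \<in> L \<Longrightarrow> loop_inv x \<in> L"
  and right_inverse: "x \<in> L \<Longrightarrow> m x (loop_inv x) = e"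
  using theI'[OF left_division[OF _ unit_closed]] unfolding loop_inv_def by blast+

lemma inv_unique:
  assumes "x \<in> L" and "y \<in> L" and "m x y = e"
  shows "loop_inv x = y"
  using left_cancel[of x "loop_inv x" y] inv_closed right_inverse assms by simp

lemma mult_inv_cancel_right:
  assumes w: "w \<in> L" and y: "y \<in> L"
  shows "m (m w y) (loop_inv y) = w"
proof -
  obtain x where x: "x \<in> L" and "m y x = w" using left_division[OF y w] by blast
  then have xy: "m x y = w" using commute y by simp
  have "m x (m y (m y (loop_inv y))) = m (m (m x y) y) (loop_inv y)"
    using C_law x y inv_closed by blast
  then show ?thesis using xy x y right_inverse right_unit by simp
qed

lemma mult_inv_cancel_left:
  assumes w: "w \<in> L" and y: "y \<in> L"
  shows "m (loop_inv y) (m y w) = w"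
proof -
  have "m (loop_inv y) (m y w) = m (m w y) (loop_inv y)"
    using commute[OF inv_closed[OF y] mult_closed[OF y w]] commute[OF y w] by simp
  then show ?thesis using mult_inv_cancel_right[OF w y] by simp
qed

lemma left_inverse: "x \<in> L \<Longrightarrow> m (loop_inv x) x = e"
  using commute inv_closed right_inverse by metis

lemma inv_inv: "x \<in> L \<Longrightarrow> loop_inv (loop_inv x) = x"
  using inv_unique inv_closed left_inverse by blast

lemma inv_unit: "loop_inv e = e"
  using inv_unique unit_closed right_unit by blast

lemma inv_mult:
  assumes x: "x \<in> L" and y: "y \<in> L"
  shows "loop_inv (m x y) = m (loop_inv x) (loop_inv y)"
proof -
  define z where "z = m x y"
  have z: "z \<in> L" using z_def mult_closed x y by simp
  have "m y (loop_inv z) = loop_inv x"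
    using mult_inv_cancel_left[OF y x] mult_inv_cancel_right[OF inv_closed[OF x] z] z_def by simp
  then have "loop_inv z = m (loop_inv y) (loop_inv x)" using mult_inv_cancel_left[OF inv_closed[OF z] y] by simp
  then show ?thesis using z_def commute inv_closed x y by simp
qed

definition nucleus :: "'a set" where
  "nucleus = {a \<in> L. \<forall>p\<in>L. \<forall>q\<in>L. m (m a p) q = m a (m p q)}"

lemma nucleus_subset: "nucleus \<subseteq> L"
  unfolding nucleus_def by blast

lemma nucleus_assoc_left: "a \<in> nucleus \<Longrightarrow> p \<in> L \<Longrightarrow> q \<in> L \<Longrightarrow> m (m a p) q = m a (m p q)"
  unfolding nucleus_def by blast

lemma nucleus_assoc_middle:
  assumes a: "a \<in> nucleus" and p: "p \<in> L" and q: "q \<in> L"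
  shows "m (m p a) q = m p (m a q)"
proof -
  have aL: "a \<in> L" using a nucleus_subset by blast
  have "m (m p a) q = m a (m p q)" using commute[OF p aL] nucleus_assoc_left[OF a p q] by simp
  also have "\<dots> = m (m a q) p" using commute[OF p q] nucleus_assoc_left[OF a q p] by simp
  also have "\<dots> = m p (m a q)" using commute[OF mult_closed[OF aL q] p] .
  finally show ?thesis .
qed

lemma nucleus_assoc_right:
  assumes a: "a \<in> nucleus" and p: "p \<in> L" and q: "q \<in> L"
  shows "m (m p q) a = m p (m q a)"
proof -
  have aL: "a \<in> L" using a nucleus_subset by blast
  have "m (m p q) a = m (m a p) q"
    using commute[OF mult_closed[OF p q] aL] nucleus_assoc_left[OF a p q] by simp
  also have "\<dots> = m p (m q a)"
    using commute[OF p aL] commute[OF aL q] nucleus_assoc_middle[OF a p q] by simp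
  finally show ?thesis .
qed

lemma middle_nucleus_imp_nucleus:
  assumes a: "a \<in> L" and middle: "\<And>x z. x \<in> L \<Longrightarrow> z \<in> L \<Longrightarrow> m (m x a) z = m x (m a z)"
  shows "a \<in> nucleus"
  unfolding nucleus_def
proof (intro CollectI conjI a ballI)
  fix p q assume p: "p \<in> L" and q: "q \<in> L"
  define x where "x = m (loop_inv p) (loop_inv a)"
  have x: "x \<in> L" using x_def mult_closed inv_closed a p by simp
  have xa: "m x a = loop_inv p"
    using mult_inv_cancel_right[OF inv_closed[OF p] inv_closed[OF a]] inv_inv[OF a] x_def by simp
  have "loop_inv x = m p a" using x_def inv_mult inv_closed inv_inv a p by simp
  then have "m (m a p) (m x (m a (m p q))) = m a (m p q)"
    using mult_inv_cancel_left[OF mult_closed[OF a mult_closed[OF p q]] x] commute[OF a p] by simp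
  moreover have "m x (m a (m p q)) = q"
    using middle[OF x mult_closed[OF p q]] xa mult_inv_cancel_left[OF q p] by simp
  ultimately show "m (m a p) q = m a (m p q)" by simp
qed

lemma square_in_nucleus:
  assumes x: "x \<in> L"
  shows "m x x \<in> nucleus"
proof (rule middle_nucleus_imp_nucleus)
  show "m x x \<in> L" using mult_closed[OF x x] .
  fix y z assume y: "y \<in> L" and z: "z \<in> L"
  have "m (m y x) x = m x (m x y)" using commute[OF mult_closed[OF y x] x] commute[OF y x] by simp
  then have "m (m y x) x = m y (m x x)"
    using left_alternative[OF x y] commute[OF mult_closed[OF x x] y] by simp
  then show "m (m y (m x x)) z = m y (m (m x x) z)"
    using C_law[OF y x z] left_alternative[OF x z] by simp
qed

lemma unit_in_nucleus: "e \<in> nucleus"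
  unfolding nucleus_def using unit_closed left_unit mult_closed by simp

lemma nucleus_mult_closed:
  assumes a: "a \<in> nucleus" and b: "b \<in> nucleus"
  shows "m a b \<in> nucleus"
  unfolding nucleus_def
proof (intro CollectI conjI ballI)
  have aL: "a \<in> L" and bL: "b \<in> L" using a b nucleus_subset by auto
  show "m a b \<in> L" using mult_closed[OF aL bL] .
  fix p q assume p: "p \<in> L" and q: "q \<in> L"
  have "m (m (m a b) p) q = m (m a (m b p)) q" using nucleus_assoc_left[OF a bL p] by simp
  also have "\<dots> = m a (m b (m p q))"
    using nucleus_assoc_left[OF a mult_closed[OF bL p] q] nucleus_assoc_left[OF b p q] by simp
  also have "\<dots> = m (m a b) (m p q)" using nucleus_assoc_left[OF a bL mult_closed[OF p q]] by simp
  finally show "m (m (m a b) p) q = m (m a b) (m p q)" .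
qed

lemma nucleus_interchange:
  assumes x: "x \<in> L" and y: "y \<in> L" and a: "a \<in> nucleus" and b: "b \<in> nucleus"
  shows "m (m x a) (m y b) = m (m x y) (m a b)"
proof -
  have aL: "a \<in> L" and bL: "b \<in> L" using a b nucleus_subset by auto
  have "m (m x a) (m y b) = m (m (m a x) y) b"
    using nucleus_assoc_right[OF b mult_closed[OF x aL] y] commute[OF x aL] by simp
  also have "\<dots> = m (m (m x y) a) b"
    using nucleus_assoc_left[OF a x y] commute[OF aL mult_closed[OF x y]] by simp
  also have "\<dots> = m (m x y) (m a b)" using nucleus_assoc_middle[OF a mult_closed[OF x y] bL] .
  finally show ?thesis .
qed

abbreviation pow :: "'a \<Rightarrow> nat \<Rightarrow> 'a" where
  "pow x n \<equiv> lpow m e x n"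

lemma pow_closed: "x \<in> L \<Longrightarrow> pow x n \<in> L"
  by (induction n) (simp_all add: unit_closed mult_closed)

lemma pow_in_nucleus: "a \<in> nucleus \<Longrightarrow> pow a n \<in> nucleus"
  by (induction n) (simp_all add: unit_in_nucleus nucleus_mult_closed)

lemma pow_unit: "pow e n = e"
  by (induction n) (simp_all add: left_unit unit_closed)

lemma pow_inv: "x \<in> L \<Longrightarrow> pow (loop_inv x) n = loop_inv (pow x n)"
  by (induction n) (simp_all add: inv_unit inv_mult pow_closed)

lemma pow_even_add:
  assumes x: "x \<in> L"
  shows "pow x (2 * k + j) = m (pow (m x x) k) (pow x j)"
proof (induction k)
  case 0
  show ?case using left_unit pow_closed x by simp
next
  case (Suc k)
  have "pow x (2 * Suc k + j) = m (m x x) (pow x (2 * k + j))"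
    using left_alternative[OF x pow_closed[OF x]] by (simp add: numeral_2_eq_2)
  also have "\<dots> = m (pow (m x x) (Suc k)) (pow x j)"
    using Suc nucleus_assoc_left[OF square_in_nucleus[OF x]] mult_closed pow_closed x by simp
  finally show ?case .
qed

lemma pow_even: "x \<in> L \<Longrightarrow> pow x (2 * k) = pow (m x x) k"
  using pow_even_add[of x k 0] right_unit pow_closed mult_closed by simp

lemma pow_add:
  assumes x: "x \<in> L"
  shows "pow x (i + j) = m (pow x i) (pow x j)"
proof (cases "even i")
  case True
  then obtain k where "i = 2 * k" by blast
  then show ?thesis using pow_even_add[OF x] pow_even[OF x] by simp
next
  case False
  then obtain k where i: "i = Suc (2 * k)" using oddE by fastforce
  have "pow x (i + j) = m x (m (pow (m x x) k) (pow x j))" using i pow_even_add[OF x] by simp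
  also have "\<dots> = m (pow x i) (pow x j)"
    using nucleus_assoc_middle[OF pow_in_nucleus[OF square_in_nucleus[OF x]] x pow_closed[OF x]]
      i pow_even[OF x] by simp
  finally show ?thesis .
qed

lemma pow_mult: "x \<in> L \<Longrightarrow> pow x (i * j) = pow (pow x i) j"
  by (induction j) (simp_all add: pow_add)

lemma pow_mult_distrib_nucleus:
  assumes a: "a \<in> nucleus" and b: "b \<in> nucleus"
  shows "pow (m a b) n = m (pow a n) (pow b n)"
proof (induction n)
  case 0
  show ?case using left_unit unit_closed by simp
next
  case (Suc n)
  have "a \<in> L" and "b \<in> L" using a b nucleus_subset by auto
  then show ?case
    using Suc nucleus_interchange[OF _ _ pow_in_nucleus[OF a] pow_in_nucleus[OF b], of a b] by simp
qed

lemma right_alternative: "x \<in> L \<Longrightarrow> y \<in> L \<Longrightarrow> m (m x y) y = m x (m y y)"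
  using left_alternative[of y x] commute mult_closed by metis

lemma square_mult_distrib:
  assumes x: "x \<in> L" and y: "y \<in> L"
  shows "m (m x y) (m x y) = m (m x x) (m y y)"
proof -
  define w where "w = m x y"
  have w: "w \<in> L" using w_def mult_closed x y by simp
  have ix: "loop_inv x \<in> L" using inv_closed[OF x] .
  have "m w (loop_inv x) = y" using w_def commute[OF x y] mult_inv_cancel_right[OF y x] by simp
  then have "m (m w w) (loop_inv x) = m x (m y y)"
    using left_alternative[OF w ix] right_alternative[OF x y] w_def by simp
  then have "m w w = m (m x (m y y)) x"
    using mult_inv_cancel_right[OF mult_closed[OF w w] ix] inv_inv[OF x] by simp
  also have "\<dots> = m x (m x (m y y))"
    using nucleus_assoc_middle[OF square_in_nucleus[OF y] x x] commute[OF mult_closed[OF y y] x] by simp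
  finally show ?thesis using left_alternative[OF x mult_closed[OF y y]] w_def by simp
qed

lemma pow_mult_distrib_even:
  assumes x: "x \<in> L" and y: "y \<in> L"
  shows "pow (m x y) (2 * n) = m (pow x (2 * n)) (pow y (2 * n))"
  using pow_even mult_closed square_mult_distrib pow_mult_distrib_nucleus square_in_nucleus x y by simp

lemma loop_of_closed_subset:
  assumes S: "S \<subseteq> L" and unit: "e \<in> S"
    and mult: "\<And>a b. a \<in> S \<Longrightarrow> b \<in> S \<Longrightarrow> m a b \<in> S"
    and inv: "\<And>a. a \<in> S \<Longrightarrow> loop_inv a \<in> S"
  shows "loop S m e"
proof -
  have left: "\<exists>!x. x \<in> S \<and> m a x = b" if a: "a \<in> S" and b: "b \<in> S" for a b
  proof (rule ex1I)
    have "a \<in> L" "b \<in> L" using a b S by auto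
    then show "m (loop_inv a) b \<in> S \<and> m a (m (loop_inv a) b) = b"
      using mult[OF inv[OF a] b] mult_inv_cancel_left[OF _ inv_closed] inv_inv by simp
    then show "x = m (loop_inv a) b" if "x \<in> S \<and> m a x = b" for x
      using that left_cancel[of a x "m (loop_inv a) b"] S \<open>a \<in> L\<close> by auto
  qed
  have right: "\<exists>!y. y \<in> S \<and> m y a = b" if "a \<in> S" and "b \<in> S" for a b
  proof -
    have "y \<in> S \<and> m y a = b \<longleftrightarrow> y \<in> S \<and> m a y = b" for y
      using commute S that by auto
    then show ?thesis using left[OF that] by simp
  qed
  show ?thesis
    unfolding loop_def using left right unit mult S left_unit right_unit by auto
qed

lemma C_loop_of_closed_subset:
  assumes "S \<subseteq> L" and "e \<in> S" and "\<And>a b. a \<in> S \<Longrightarrow> b \<in> S \<Longrightarrow> m a b \<in> S"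
    and "\<And>a. a \<in> S \<Longrightarrow> loop_inv a \<in> S"
  shows "C_loop S m e"
  unfolding C_loop_def using loop_of_closed_subset[OF assms] C_law assms(1) by blast

lemma group_loop_of_closed_subset_nucleus:
  assumes "S \<subseteq> nucleus" and "e \<in> S" and "\<And>a b. a \<in> S \<Longrightarrow> b \<in> S \<Longrightarrow> m a b \<in> S"
    and "\<And>a. a \<in> S \<Longrightarrow> loop_inv a \<in> S"
  shows "group_loop S m e"
  unfolding group_loop_def
  using loop_of_closed_subset[OF _ assms(2-)] assms(1) nucleus_subset nucleus_assoc_left by blast

lemma commutative_on_subset: "S \<subseteq> L \<Longrightarrow> commutative_on S m"
  unfolding commutative_on_def using commute by blast

end

locale finite_comm_C_loop = comm_C_loop +
  assumes finite: "finite L"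
begin

abbreviation ord :: "'a \<Rightarrow> nat" where
  "ord x \<equiv> elem_ord m e x"

lemma pow_eq_unit_for_some_pos:
  assumes x: "x \<in> L"
  shows "\<exists>n>0. pow x n = e"
proof -
  have "finite (range (pow x))" using finite pow_closed[OF x] by (meson finite_subset image_subsetI)
  then have "\<not> inj (pow x)" using finite_imageD infinite_UNIV_nat by blast
  then obtain i j where "i \<noteq> j" and eq: "pow x i = pow x j" unfolding inj_def by blast
  then consider "i < j" | "j < i" by linarith
  then obtain i j where ij: "i < j" and "pow x i = pow x j" using eq by metis
  then have "m (pow x i) (pow x (j - i)) = m (pow x i) e"
    using pow_add[OF x, of i "j - i"] right_unit pow_closed[OF x] by simp
  then have "pow x (j - i) = e" using left_cancel pow_closed[OF x] unit_closed by blast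
  then show ?thesis using ij by (intro exI[of _ "j - i"]) simp
qed

lemma ord_pos: "x \<in> L \<Longrightarrow> ord x > 0"
  and pow_ord: "x \<in> L \<Longrightarrow> pow x (ord x) = e"
  using LeastI_ex[OF pow_eq_unit_for_some_pos] unfolding elem_ord_def by auto

lemma pow_eq_unit_iff:
  assumes x: "x \<in> L"
  shows "pow x n = e \<longleftrightarrow> ord x dvd n"
proof
  assume "ord x dvd n"
  then obtain q where "n = ord x * q" by blast
  then show "pow x n = e" using pow_mult[OF x] pow_ord[OF x] pow_unit by simp
next
  assume n: "pow x n = e"
  have "pow x n = m (pow x (ord x * (n div ord x))) (pow x (n mod ord x))"
    using pow_add[OF x, of "ord x * (n div ord x)" "n mod ord x"] by simp
  also have "pow x (ord x * (n div ord x)) = e" using pow_mult[OF x] pow_ord[OF x] pow_unit by simp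
  finally have "pow x (n mod ord x) = e" using n left_unit pow_closed[OF x] by simp
  moreover have "n mod ord x < ord x" using ord_pos[OF x] by simp
  ultimately have "n mod ord x = 0"
    using not_less_Least[of "n mod ord x" "\<lambda>k. k > 0 \<and> pow x k = e"] unfolding elem_ord_def by auto
  then show "ord x dvd n" by auto
qed

lemma pow_ord_mult: "x \<in> L \<Longrightarrow> pow x (ord x * k) = e"
  using pow_eq_unit_iff by simp

lemma ord_unit: "ord e = 1"
  using pow_eq_unit_iff[OF unit_closed, of 1] right_unit[OF unit_closed] by simp

lemma ord_eq_1_imp_unit: "x \<in> L \<Longrightarrow> ord x = 1 \<Longrightarrow> x = e"
  using pow_ord right_unit by fastforce

lemma odd_ord_in_nucleus:
  assumes x: "x \<in> L" and odd: "odd (ord x)"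
  shows "x \<in> nucleus"
proof -
  obtain k where "ord x = 2 * k + 1" using odd by (rule oddE)
  then have k: "ord x + 1 = 2 * Suc k" by simp
  have "x = pow x (ord x + 1)" using pow_add[OF x, of "ord x" 1] pow_ord[OF x] left_unit right_unit x by simp
  also have "\<dots> = pow (m x x) (Suc k)" unfolding k by (rule pow_even[OF x])
  finally show ?thesis using pow_in_nucleus[OF square_in_nucleus[OF x]] by metis
qed

definition two_part :: "'a set" where
  "two_part = {x \<in> L. \<exists>k. ord x = 2 ^ k}"

definition odd_part :: "'a set" where
  "odd_part = {x \<in> L. odd (ord x)}"

lemma two_part_subset: "two_part \<subseteq> L" and odd_part_subset: "odd_part \<subseteq> L"
  unfolding two_part_def odd_part_def by auto

lemma two_partI:
  assumes x: "x \<in> L" and "pow x (2 ^ k) = e"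
  shows "x \<in> two_part"
proof -
  have "ord x dvd 2 ^ k" using assms pow_eq_unit_iff[OF x] by simp
  then show ?thesis using x divides_primepow_nat[OF two_is_prime_nat] unfolding two_part_def by auto
qed

lemma odd_partI:
  assumes x: "x \<in> L" and "odd n" and "pow x n = e"
  shows "x \<in> odd_part"
proof -
  have "ord x dvd n" using assms pow_eq_unit_iff[OF x] by simp
  then show ?thesis using x \<open>odd n\<close> dvd_trans unfolding odd_part_def by blast
qed

lemma unit_in_two_part: "e \<in> two_part" and unit_in_odd_part: "e \<in> odd_part"
  using ord_unit unit_closed unfolding two_part_def odd_part_def by (auto intro: exI[of _ 0])

lemma odd_part_subset_nucleus: "odd_part \<subseteq> nucleus"
  using odd_ord_in_nucleus unfolding odd_part_def by blast

lemma two_part_inv_closed: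
  assumes x: "x \<in> two_part"
  shows "loop_inv x \<in> two_part"
proof -
  obtain k where xL: "x \<in> L" and k: "ord x = 2 ^ k" using x unfolding two_part_def by blast
  show ?thesis using two_partI[OF inv_closed[OF xL], of k] pow_inv[OF xL] pow_ord[OF xL] k inv_unit by simp
qed

lemma odd_part_inv_closed:
  assumes x: "x \<in> odd_part"
  shows "loop_inv x \<in> odd_part"
proof -
  have xL: "x \<in> L" and "odd (ord x)" using x unfolding odd_part_def by auto
  then show ?thesis using odd_partI[OF inv_closed[OF xL]] pow_inv[OF xL] pow_ord[OF xL] inv_unit by simp
qed

lemma two_part_mult_closed:
  assumes a: "a \<in> two_part" and b: "b \<in> two_part"
  shows "m a b \<in> two_part"
proof -
  obtain i j where aL: "a \<in> L" and bL: "b \<in> L" and i: "ord a = 2 ^ i" and j: "ord b = 2 ^ j"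
    using a b unfolding two_part_def by blast
  have "pow a (2 * 2 ^ (i + j)) = e" and "pow b (2 * 2 ^ (i + j)) = e"
    using pow_eq_unit_iff[OF aL] pow_eq_unit_iff[OF bL] i j by (simp_all add: power_add)
  then have "pow (m a b) (2 ^ Suc (i + j)) = e"
    using pow_mult_distrib_even[OF aL bL] left_unit[OF unit_closed] by simp
  then show ?thesis using two_partI mult_closed[OF aL bL] by blast
qed

lemma odd_part_mult_closed:
  assumes a: "a \<in> odd_part" and b: "b \<in> odd_part"
  shows "m a b \<in> odd_part"
proof -
  have aL: "a \<in> L" and bL: "b \<in> L" and odd: "odd (ord a * ord b)"
    using a b unfolding odd_part_def by auto
  have "pow (m a b) (ord a * ord b) = m (pow a (ord a * ord b)) (pow b (ord a * ord b))"
    using pow_mult_distrib_nucleus a b odd_part_subset_nucleus by blast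
  also have "\<dots> = e"
    using pow_ord_mult[OF aL, of "ord b"] pow_ord_mult[OF bL, of "ord a"] left_unit[OF unit_closed]
    by (simp add: mult.commute[of "ord b"])
  finally show ?thesis using odd_partI[OF mult_closed[OF aL bL] odd] by blast
qed

lemma two_part_inter_odd_part: "two_part \<inter> odd_part = {e}"
proof -
  have "x = e" if x: "x \<in> two_part" "x \<in> odd_part" for x
  proof -
    obtain k where "x \<in> L" and k: "ord x = 2 ^ k" "odd (ord x)"
      using x unfolding two_part_def odd_part_def by blast
    moreover have "ord x = 1" using k by (cases k) simp_all
    ultimately show ?thesis using ord_eq_1_imp_unit by blast
  qed
  then show ?thesis using unit_in_two_part unit_in_odd_part by blast
qed

text \<open>Write |x| = 2^k q with q odd and choose q X = 2^k Y + 1. Then x x^(2^k Y) = x^(q X) has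
  order dividing 2^k, and the inverse of x^(2^k Y) has order dividing q.\<close>
lemma two_odd_decomposition:
  assumes x: "x \<in> L"
  shows "\<exists>u\<in>two_part. \<exists>v\<in>odd_part. m u v = x"
proof -
  obtain q where "ord x = 2 ^ multiplicity 2 (ord x) * q" and q: "odd q"
    using multiplicity_decompose'[of "ord x" 2] ord_pos[OF x] by auto
  then obtain k where n: "ord x = 2 ^ k * q" by blast
  have "q \<noteq> 0" and "gcd q (2 ^ k) = 1" using q odd_pos[OF q] by auto
  then obtain X Y where XY: "q * X = 2 ^ k * Y + 1" using bezout_nat[of q "2 ^ k"] by auto
  define w where "w = pow x (2 ^ k * Y)"
  have w: "w \<in> L" using pow_closed[OF x] w_def by simp
  have "pow (m x w) (2 ^ k) = pow x (ord x * X)"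
    using pow_mult[OF x, of "q * X" "2 ^ k"] XY n w_def by (simp add: ac_simps)
  then have "pow (m x w) (2 ^ k) = e" using pow_ord_mult[OF x] by simp
  then have "m x w \<in> two_part" by (rule two_partI[OF mult_closed[OF x w]])
  moreover have "pow (loop_inv w) q = loop_inv (pow x (ord x * Y))"
    using pow_inv[OF w] pow_mult[OF x, of "2 ^ k * Y" q] n w_def by (simp add: ac_simps)
  then have "pow (loop_inv w) q = e" using pow_ord_mult[OF x] inv_unit by simp
  then have "loop_inv w \<in> odd_part" by (rule odd_partI[OF inv_closed[OF w] q])
  moreover have "m (m x w) (loop_inv w) = x" using mult_inv_cancel_right[OF x w] .
  ultimately show ?thesis by blast
qed

lemma two_odd_decomposition_unique:
  assumes u1: "u1 \<in> two_part" and u2: "u2 \<in> two_part" and v1: "v1 \<in> odd_part" and v2: "v2 \<in> odd_part"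
    and eq: "m u1 v1 = m u2 v2"
  shows "u1 = u2 \<and> v1 = v2"
proof -
  have L: "u1 \<in> L" "u2 \<in> L" "v1 \<in> L" "v2 \<in> L"
    using u1 u2 v1 v2 two_part_subset odd_part_subset by auto
  define c where "c = m v2 (loop_inv v1)"
  have "c \<in> odd_part" using c_def odd_part_mult_closed[OF v2 odd_part_inv_closed[OF v1]] by simp
  have "u1 = m (m u2 v2) (loop_inv v1)" using mult_inv_cancel_right[of u1 v1] eq L by simp
  also have "\<dots> = m u2 c"
    using nucleus_assoc_right odd_part_subset_nucleus odd_part_inv_closed[OF v1] c_def L by blast
  finally have u1_eq: "u1 = m u2 c" .
  then have "c = m (loop_inv u2) u1" using mult_inv_cancel_left c_def L inv_closed mult_closed by simp
  then have "c \<in> two_part" using two_part_mult_closed[OF two_part_inv_closed[OF u2] u1] by simp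
  with \<open>c \<in> odd_part\<close> have "c = e" using two_part_inter_odd_part by blast
  then have "u1 = u2" using u1_eq right_unit L by simp
  moreover have "v1 = v2" using left_cancel eq L \<open>u1 = u2\<close> by blast
  ultimately show ?thesis ..
qed

lemma bij_betw_two_odd: "bij_betw (\<lambda>(u, v). m u v) (two_part \<times> odd_part) L"
  unfolding bij_betw_def
proof
  show "inj_on (\<lambda>(u, v). m u v) (two_part \<times> odd_part)"
  proof (rule inj_onI, clarify)
    fix u1 v1 u2 v2
    assume "u1 \<in> two_part" "v1 \<in> odd_part" "u2 \<in> two_part" "v2 \<in> odd_part" "m u1 v1 = m u2 v2"
    then show "u1 = u2 \<and> v1 = v2" using two_odd_decomposition_unique by blast
  qed
  show "(\<lambda>(u, v). m u v) ` (two_part \<times> odd_part) = L"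
  proof
    show "(\<lambda>(u, v). m u v) ` (two_part \<times> odd_part) \<subseteq> L"
      using two_part_subset odd_part_subset mult_closed by auto
    show "L \<subseteq> (\<lambda>(u, v). m u v) ` (two_part \<times> odd_part)"
    proof
      fix x assume "x \<in> L"
      then obtain u v where "u \<in> two_part" "v \<in> odd_part" "m u v = x"
        using two_odd_decomposition by blast
      then show "x \<in> (\<lambda>(u, v). m u v) ` (two_part \<times> odd_part)" by force
    qed
  qed
qed

end

theorem theorem7p3:
  fixes L :: "'a set" and m :: "'a \<Rightarrow> 'a \<Rightarrow> 'a" and e :: 'a
  assumes "finite L" and "C_loop L m e" and "commutative_on L m"
  defines "U \<equiv> {x \<in> L. \<exists>k. elem_ord m e x = 2 ^ k}"
      and "V \<equiv> {x \<in> L. odd (elem_ord m e x)}"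
  shows "group_loop V m e \<and> commutative_on V m
       \<and> C_loop U m e \<and> commutative_on U m
       \<and> (\<forall>x\<in>U. \<exists>k. elem_ord m e x = 2 ^ k)
       \<and> bij_betw (\<lambda>(u, v). m u v) (U \<times> V) L
       \<and> (\<forall>u1\<in>U. \<forall>u2\<in>U. \<forall>v1\<in>V. \<forall>v2\<in>V.
            m (m u1 v1) (m u2 v2) = m (m u1 u2) (m v1 v2))"
proof -
  interpret finite_comm_C_loop L m e
    by unfold_locales (rule assms)+
  have U: "U = two_part" and V: "V = odd_part"
    unfolding U_def V_def two_part_def odd_part_def by (rule refl)+
  have "group_loop V m e"
    unfolding V by (rule group_loop_of_closed_subset_nucleus[OF odd_part_subset_nucleus
        unit_in_odd_part odd_part_mult_closed odd_part_inv_closed])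
  moreover have "C_loop U m e"
    unfolding U by (rule C_loop_of_closed_subset[OF two_part_subset
        unit_in_two_part two_part_mult_closed two_part_inv_closed])
  moreover have "m (m u1 v1) (m u2 v2) = m (m u1 u2) (m v1 v2)"
    if "u1 \<in> U" "u2 \<in> U" "v1 \<in> V" "v2 \<in> V" for u1 u2 v1 v2
    using nucleus_interchange that two_part_subset odd_part_subset_nucleus unfolding U V by blast
  ultimately show ?thesis
    using commutative_on_subset two_part_subset odd_part_subset bij_betw_two_odd
    unfolding U V two_part_def by auto
qed

end
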